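(* Let $q\ge1$ and let $\mathcal{T}_q=(\tau_1,\ldots,\tau_q)$ be the permutation ideal in $S_{\mathcal{T}}$. Then (a) $\mathcal{T}_q$ is minimally generated by $\{\tau_1,\ldots,\tau_q\}$; (b) $\mathcal{T}_q^{\,2}$ is minimally generated by $\{\tau_i\tau_j:1\le i\le j\le q\}$, and in particular the minimal generating set of $\mathcal{T}_q^{\,2}$ has exactly $\binom{q}{2}+q$ elements.
   Context: Let $S_q$ be the symmetric group on $[q]=\{1,\ldots,q\}$; for $\sigma=i_1\cdots i_q$ in one-line notation, $\sigma(j)=i_j$. Let $K$ be a field, $S_{\mathcal{T}}=K[x_\sigma:\sigma\in S_q]$, $\tau_i=\prod_{\sigma\in S_q}x_\sigma^{\sigma(i)}$ for $i\in[q]$, and $\mathcal{T}_q=(\tau_1,\ldots,\tau_q)$ (the permutation ideal). *)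

theory Defs
  imports "HOL-Library.Poly_Mapping" "HOL-Combinatorics.Permutations"
begin

text \<open>Monomials in variables x_sigma are finitely supported exponent maps (nat=>nat) =>0 nat;
polynomials over the field 'k are finitely supported coefficient maps on monomials,
with convolution product (HOL-Library.Poly_Mapping).\<close>

type_synonym 'k perm_poly = "((nat \<Rightarrow> nat) \<Rightarrow>\<^sub>0 nat) \<Rightarrow>\<^sub>0 'k"

definition Sq :: "nat \<Rightarrow> (nat \<Rightarrow> nat) set" where
  "Sq q = {\<sigma>. \<sigma> permutes {1..q}}"

definition ST :: "nat \<Rightarrow> 'k::field perm_poly set" where
  "ST q = {p :: 'k perm_poly. \<forall>m\<in>Poly_Mapping.keys p. Poly_Mapping.keys m \<subseteq> Sq q}"

definition tau :: "nat \<Rightarrow> nat \<Rightarrow> 'k::field perm_poly" where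
  "tau q i = Poly_Mapping.single (\<Sum>\<sigma>\<in>Sq q. Poly_Mapping.single \<sigma> (\<sigma> i)) 1"

definition ideal_gen :: "nat \<Rightarrow> 'k::field perm_poly set \<Rightarrow> 'k perm_poly set" where
  "ideal_gen q G = {(\<Sum>g\<in>F. r g * g) | F r. finite F \<and> F \<subseteq> G \<and> (\<forall>g\<in>F. r g \<in> ST q)}"

definition ideal_mult :: "nat \<Rightarrow> 'k::field perm_poly set \<Rightarrow> 'k perm_poly set \<Rightarrow> 'k perm_poly set" where
  "ideal_mult q I J = ideal_gen q {a * b | a b. a \<in> I \<and> b \<in> J}"

definition perm_ideal :: "nat \<Rightarrow> 'k::field perm_poly set" where
  "perm_ideal q = ideal_gen q (tau q ` {1..q})"

definition minimally_generates :: "nat \<Rightarrow> 'k::field perm_poly set \<Rightarrow> 'k perm_poly set \<Rightarrow> bool" where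
  "minimally_generates q G I \<longleftrightarrow>
     G \<subseteq> ST q \<and> ideal_gen q G = I \<and> (\<forall>H. H \<subset> G \<longrightarrow> ideal_gen q H \<noteq> I)"

end

theory Submission
  imports Defs
begin

text \<open>A monomial lies in an
ideal generated by monomials only if one of the generators divides it, so a set of monomials
none of which divides another minimally generates its ideal. If the multisets \<open>{i,j}\<close> and
\<open>{k,l}\<close> differ, say \<open>i \<notin> {k,l}\<close>, a permutation with \<open>\<sigma>(i) = q\<close> and \<open>\<sigma>(j) \<ge> q - 1\<close> gives
\<open>\<sigma>(k) + \<sigma>(l) \<le> 2q - 2 < \<sigma>(i) + \<sigma>(j)\<close>, so \<open>\<tau>\<^sub>k\<tau>\<^sub>l\<close> does not divide \<open>\<tau>\<^sub>i\<tau>\<^sub>j\<close>; in the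
remaining case \<open>i = j \<in> {k,l}\<close> any \<open>\<sigma>\<close> with \<open>\<sigma>(i) = q\<close> does the job.\<close>

lemma zero_in_ST: "0 \<in> ST q"
  by (simp add: ST_def)

lemma ST_add:
  fixes a b :: "'k::field perm_poly"
  assumes "a \<in> ST q" "b \<in> ST q"
  shows "a + b \<in> ST q"
  using assms keys_add[of a b] unfolding ST_def by blast

lemma ST_mult:
  fixes a b :: "'k::field perm_poly"
  assumes "a \<in> ST q" "b \<in> ST q"
  shows "a * b \<in> ST q"
  unfolding ST_def mem_Collect_eq
proof
  fix m assume "m \<in> Poly_Mapping.keys (a * b)"
  then obtain x y where "m = x + y" "x \<in> Poly_Mapping.keys a" "y \<in> Poly_Mapping.keys b"
    using keys_mult[of a b] by blast
  with assms keys_add[of x y] show "Poly_Mapping.keys m \<subseteq> Sq q"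
    unfolding ST_def by blast
qed

lemma zero_in_ideal_gen: "0 \<in> ideal_gen q G"
  unfolding ideal_gen_def by (intro CollectI exI[of _ "{}"]) simp

lemma generator_in_ideal_gen: "g \<in> G \<Longrightarrow> g \<in> ideal_gen q G"
  unfolding ideal_gen_def
  by (intro CollectI exI[of _ "{g}"] exI[of _ "\<lambda>_. 1"]) (auto simp: ST_def)

lemma ideal_gen_add:
  assumes "x \<in> ideal_gen q G" "y \<in> ideal_gen q G"
  shows "x + y \<in> ideal_gen q G"
proof -
  obtain F1 r1 where F1: "x = (\<Sum>g\<in>F1. r1 g * g)" "finite F1" "F1 \<subseteq> G" "\<forall>g\<in>F1. r1 g \<in> ST q"
    using assms(1) unfolding ideal_gen_def by blast
  obtain F2 r2 where F2: "y = (\<Sum>g\<in>F2. r2 g * g)" "finite F2" "F2 \<subseteq> G" "\<forall>g\<in>F2. r2 g \<in> ST q"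
    using assms(2) unfolding ideal_gen_def by blast
  define r where "r g = (if g \<in> F1 then r1 g else 0) + (if g \<in> F2 then r2 g else 0)" for g
  have "(\<Sum>g\<in>F1 \<union> F2. r g * g)
      = (\<Sum>g\<in>F1 \<union> F2. if g \<in> F1 then r1 g * g else 0) + (\<Sum>g\<in>F1 \<union> F2. if g \<in> F2 then r2 g * g else 0)"
    unfolding sum.distrib[symmetric] by (rule sum.cong) (auto simp: r_def distrib_right)
  also have "\<dots> = x + y"
    using F1 F2 by (simp add: sum.inter_restrict[symmetric] Int_absorb1)
  finally have "x + y = (\<Sum>g\<in>F1 \<union> F2. r g * g)" ..
  moreover have "\<forall>g\<in>F1 \<union> F2. r g \<in> ST q"
    using F1(4) F2(4) by (auto simp: r_def intro!: ST_add zero_in_ST)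
  ultimately show ?thesis
    using F1 F2 unfolding ideal_gen_def by blast
qed

lemma ideal_gen_sum:
  "finite A \<Longrightarrow> (\<And>a. a \<in> A \<Longrightarrow> f a \<in> ideal_gen q G) \<Longrightarrow> sum f A \<in> ideal_gen q G"
  by (induction A rule: finite_induct) (auto simp: zero_in_ideal_gen ideal_gen_add)

lemma ideal_gen_mult_left:
  assumes "x \<in> ideal_gen q G" "c \<in> ST q"
  shows "c * x \<in> ideal_gen q G"
proof -
  obtain F r where F: "x = (\<Sum>g\<in>F. r g * g)" "finite F" "F \<subseteq> G" "\<forall>g\<in>F. r g \<in> ST q"
    using assms(1) unfolding ideal_gen_def by blast
  then have "c * x = (\<Sum>g\<in>F. (c * r g) * g)"
    by (simp add: sum_distrib_left mult.assoc)
  with F assms(2) show ?thesis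
    unfolding ideal_gen_def by (auto intro!: exI[of _ F] simp: ST_mult)
qed

lemma ideal_gen_mult_right:
  assumes "x \<in> ideal_gen q G" "\<And>g. g \<in> G \<Longrightarrow> g * y \<in> ideal_gen q K"
  shows "x * y \<in> ideal_gen q K"
proof -
  obtain F r where F: "x = (\<Sum>g\<in>F. r g * g)" "finite F" "F \<subseteq> G" "\<forall>g\<in>F. r g \<in> ST q"
    using assms(1) unfolding ideal_gen_def by blast
  then have "x * y = (\<Sum>g\<in>F. r g * (g * y))"
    by (simp add: sum_distrib_right mult.assoc)
  also have "\<dots> \<in> ideal_gen q K"
    using F assms(2) by (intro ideal_gen_sum) (auto intro: ideal_gen_mult_left)
  finally show ?thesis .
qed

lemma ideal_gen_mono: "G \<subseteq> H \<Longrightarrow> ideal_gen q G \<subseteq> ideal_gen q H"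
  unfolding ideal_gen_def by blast

lemma ideal_gen_subset:
  assumes "G \<subseteq> ideal_gen q H"
  shows "ideal_gen q G \<subseteq> ideal_gen q H"
proof
  fix x assume "x \<in> ideal_gen q G"
  then obtain F r where F: "x = (\<Sum>g\<in>F. r g * g)" "finite F" "F \<subseteq> G" "\<forall>g\<in>F. r g \<in> ST q"
    unfolding ideal_gen_def by blast
  show "x \<in> ideal_gen q H"
    unfolding F(1) using F assms by (intro ideal_gen_sum) (auto intro: ideal_gen_mult_left)
qed

lemma ideal_mult_ideal_gen:
  "ideal_mult q (ideal_gen q A) (ideal_gen q B) = ideal_gen q {a * b | a b. a \<in> A \<and> b \<in> B}"
    (is "_ = ideal_gen q ?AB")
proof
  have "a * y \<in> ideal_gen q ?AB" if "a \<in> A" "y \<in> ideal_gen q B" for a y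
  proof -
    have "b * a \<in> ?AB" if "b \<in> B" for b
      using \<open>a \<in> A\<close> that by (auto simp: mult.commute)
    then have "y * a \<in> ideal_gen q ?AB"
      by (intro ideal_gen_mult_right[OF that(2)] generator_in_ideal_gen)
    then show ?thesis
      by (simp add: mult.commute)
  qed
  then have "x * y \<in> ideal_gen q ?AB" if "x \<in> ideal_gen q A" "y \<in> ideal_gen q B" for x y
    using that by (auto intro: ideal_gen_mult_right)
  then show "ideal_mult q (ideal_gen q A) (ideal_gen q B) \<subseteq> ideal_gen q ?AB"
    unfolding ideal_mult_def by (intro ideal_gen_subset) blast
  show "ideal_gen q ?AB \<subseteq> ideal_mult q (ideal_gen q A) (ideal_gen q B)"
    unfolding ideal_mult_def by (intro ideal_gen_mono) (blast intro: generator_in_ideal_gen)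
qed

lemma single_one_eq_iff:
  "Poly_Mapping.single s (1::'a::zero_neq_one) = Poly_Mapping.single t 1 \<longleftrightarrow> s = t"
  by (metis lookup_single_eq lookup_single_not_eq zero_neq_one)

lemma monomial_ideal_keys_divisible:
  assumes "H \<subseteq> range (\<lambda>t. Poly_Mapping.single t (1::'k::field))"
    and "p \<in> ideal_gen q H" and "m \<in> Poly_Mapping.keys p"
  shows "\<exists>s a. Poly_Mapping.single s 1 \<in> H \<and> m = a + s"
proof -
  obtain F r where F: "p = (\<Sum>g\<in>F. r g * g)" "F \<subseteq> H"
    using assms(2) unfolding ideal_gen_def by blast
  then obtain g where g: "g \<in> F" "m \<in> Poly_Mapping.keys (r g * g)"
    using assms(3) keys_sum[of "\<lambda>g. r g * g" F] by blast
  then obtain s where s: "g = Poly_Mapping.single s 1"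
    using F(2) assms(1) by blast
  obtain a b where "m = a + b" "b \<in> Poly_Mapping.keys g"
    using g(2) keys_mult[of "r g" g] by blast
  with s g(1) F(2) show ?thesis
    by auto
qed

lemma minimally_generates_monomial_antichain:
  fixes T :: "((nat \<Rightarrow> nat) \<Rightarrow>\<^sub>0 nat) set"
  defines "G \<equiv> (\<lambda>t. Poly_Mapping.single t (1::'k::field)) ` T"
  assumes "G \<subseteq> ST q"
    and antichain: "\<And>s t a. s \<in> T \<Longrightarrow> t \<in> T \<Longrightarrow> t = a + s \<Longrightarrow> s = t"
  shows "minimally_generates q G (ideal_gen q G)"
  unfolding minimally_generates_def
proof (intro conjI allI impI)
  fix H assume "H \<subset> G"
  then obtain t where t: "t \<in> T" "Poly_Mapping.single t 1 \<notin> H"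
    unfolding G_def by blast
  show "ideal_gen q H \<noteq> ideal_gen q G"
  proof
    assume "ideal_gen q H = ideal_gen q G"
    then have "Poly_Mapping.single t 1 \<in> ideal_gen q H"
      using t(1) unfolding G_def by (auto intro: generator_in_ideal_gen)
    moreover have "H \<subseteq> range (\<lambda>t. Poly_Mapping.single t (1::'k))"
      using \<open>H \<subset> G\<close> unfolding G_def by blast
    ultimately obtain s a where s: "Poly_Mapping.single s 1 \<in> H" "t = a + s"
      using monomial_ideal_keys_divisible[of H] by fastforce
    then have "s \<in> T"
      using \<open>H \<subset> G\<close> unfolding G_def by (auto simp: single_one_eq_iff)
    then show False
      using antichain[OF _ t(1) s(2)] s(1) t(2) by simp
  qed
qed (use assms in auto)

lemma Sq_in_range: "\<sigma> \<in> Sq q \<Longrightarrow> x \<in> {1..q} \<Longrightarrow> \<sigma> x \<in> {1..q}"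
  unfolding Sq_def using permutes_in_image[of \<sigma> "{1..q}" x] by blast

lemma Sq_less_top:
  assumes "\<sigma> \<in> Sq q" "\<sigma> i = q" "x \<in> {1..q}" "x \<noteq> i"
  shows "\<sigma> x < q"
proof -
  have "\<sigma> x \<noteq> \<sigma> i"
    using assms(1,4) permutes_inj[of \<sigma> "{1..q}"] unfolding Sq_def by (auto dest: injD)
  then show ?thesis
    using assms(2) Sq_in_range[OF assms(1,3)] by auto
qed

lemma Sq_exists_top_two:
  assumes "i \<in> {1..q}" "j \<in> {1..q}"
  shows "\<exists>\<sigma>\<in>Sq q. \<sigma> i = q \<and> q - 1 \<le> \<sigma> j"
proof (cases "i = j")
  case True
  have "transpose i q \<in> Sq q"
    using assms unfolding Sq_def by (intro CollectI permutes_swap_id) auto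
  moreover have "transpose i q i = q"
    by simp
  ultimately show ?thesis
    using True by (intro bexI[of _ "transpose i q"]) auto
next
  case False
  define \<rho> where "\<rho> = transpose i q"
  have \<rho>: "\<rho> \<in> Sq q" "\<rho> i = q"
    using assms unfolding \<rho>_def Sq_def by (auto intro: permutes_swap_id)
  have "\<rho> j \<in> {1..q}" "\<rho> j < q"
    using Sq_in_range[OF \<rho>(1) assms(2)] Sq_less_top[OF \<rho> assms(2)] False by auto
  define \<sigma> where "\<sigma> = transpose (\<rho> j) (q - 1) \<circ> \<rho>"
  have "transpose (\<rho> j) (q - 1) permutes {1..q}"
    using \<open>\<rho> j \<in> {1..q}\<close> \<open>\<rho> j < q\<close> by (intro permutes_swap_id) auto
  then have "\<sigma> \<in> Sq q"
    using \<rho>(1) unfolding \<sigma>_def Sq_def by (simp add: permutes_compose)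
  moreover have "\<sigma> i = q" "\<sigma> j = q - 1"
    using \<rho>(2) \<open>\<rho> j < q\<close> unfolding \<sigma>_def by (auto simp: transpose_def)
  ultimately show ?thesis
    by auto
qed

lemma Sq_separates_pairs:
  assumes "i \<in> {1..q}" "j \<in> {1..q}" "k \<in> {1..q}" "l \<in> {1..q}"
    and "\<not> ((i = k \<and> j = l) \<or> (i = l \<and> j = k))"
  shows "\<exists>\<sigma>\<in>Sq q. \<sigma> k + \<sigma> l < \<sigma> i + \<sigma> j"
proof -
  have outside: "\<exists>\<sigma>\<in>Sq q. \<sigma> k + \<sigma> l < \<sigma> i + \<sigma> j"
    if ij: "i \<in> {1..q}" "j \<in> {1..q}" and "i \<noteq> k" "i \<noteq> l" for i j
  proof -
    obtain \<sigma> where \<sigma>: "\<sigma> \<in> Sq q" "\<sigma> i = q" "q - 1 \<le> \<sigma> j"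
      using Sq_exists_top_two[OF ij] by blast
    have "\<sigma> k < q" "\<sigma> l < q"
      using Sq_less_top[OF \<sigma>(1,2)] assms(3,4) \<open>i \<noteq> k\<close> \<open>i \<noteq> l\<close> by auto
    then have "\<sigma> k + \<sigma> l < \<sigma> i + \<sigma> j"
      using \<sigma>(2,3) by linarith
    with \<sigma>(1) show ?thesis
      by blast
  qed
  consider "i \<noteq> k \<and> i \<noteq> l" | "j \<noteq> k \<and> j \<noteq> l" | "i = j" "k \<noteq> i \<or> l \<noteq> i"
    using assms(5) by blast
  then show ?thesis
  proof cases
    case 1
    with outside[OF assms(1,2)] show ?thesis
      by blast
  next
    case 2
    with outside[OF assms(2,1)] show ?thesis
      by (simp add: add.commute)
  next
    case 3
    obtain \<sigma> where \<sigma>: "\<sigma> \<in> Sq q" "\<sigma> i = q"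
      using Sq_exists_top_two[OF assms(1,1)] by blast
    have "\<sigma> k \<le> q" "\<sigma> l \<le> q"
      using Sq_in_range[OF \<sigma>(1)] assms(3,4) by auto
    moreover have "\<sigma> k < q \<or> \<sigma> l < q"
      using Sq_less_top[OF \<sigma>] assms(3,4) 3(2) by blast
    ultimately have "\<sigma> k + \<sigma> l < \<sigma> i + \<sigma> j"
      using \<sigma>(2) 3(1) by auto
    with \<sigma>(1) show ?thesis
      by blast
  qed
qed

definition tau_exp :: "nat \<Rightarrow> nat \<Rightarrow> (nat \<Rightarrow> nat) \<Rightarrow>\<^sub>0 nat" where
  "tau_exp q i = (\<Sum>\<sigma>\<in>Sq q. Poly_Mapping.single \<sigma> (\<sigma> i))"

lemma tau_eq_single_tau_exp: "tau q i = Poly_Mapping.single (tau_exp q i) 1"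
  by (simp add: tau_def tau_exp_def)

lemma tau_mult_tau: "tau q i * tau q j = Poly_Mapping.single (tau_exp q i + tau_exp q j) 1"
  by (simp add: tau_eq_single_tau_exp mult_single)

lemma lookup_tau_exp: "\<sigma> \<in> Sq q \<Longrightarrow> Poly_Mapping.lookup (tau_exp q i) \<sigma> = \<sigma> i"
  using finite_permutations[of "{1..q}"]
  by (simp add: tau_exp_def Sq_def lookup_sum lookup_single when_def)

lemma tau_in_ST: "tau q i \<in> ST q"
proof -
  have "Poly_Mapping.keys (tau_exp q i) \<subseteq> Sq q"
    unfolding tau_exp_def using keys_sum[of "\<lambda>\<sigma>. Poly_Mapping.single \<sigma> (\<sigma> i)" "Sq q"]
    by (auto split: if_splits)
  then show ?thesis
    by (simp add: ST_def tau_eq_single_tau_exp)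
qed

lemma tau_exp_pair_dvd_imp_eq:
  assumes "i \<in> {1..q}" "j \<in> {1..q}" "k \<in> {1..q}" "l \<in> {1..q}"
    and "tau_exp q i + tau_exp q j = a + (tau_exp q k + tau_exp q l)"
  shows "(i = k \<and> j = l) \<or> (i = l \<and> j = k)"
proof (rule ccontr)
  assume "\<not> ?thesis"
  then obtain \<sigma> where \<sigma>: "\<sigma> \<in> Sq q" "\<sigma> i + \<sigma> j < \<sigma> k + \<sigma> l"
    using Sq_separates_pairs[of k q l i j] assms(1-4) by auto
  have "Poly_Mapping.lookup (tau_exp q k + tau_exp q l) \<sigma> \<le> Poly_Mapping.lookup (tau_exp q i + tau_exp q j) \<sigma>"
    unfolding assms(5) by (simp add: lookup_add)
  with \<sigma> show False
    by (simp add: lookup_add lookup_tau_exp)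
qed

lemma tau_exp_dvd_imp_eq:
  assumes "i \<in> {1..q}" "k \<in> {1..q}" "tau_exp q i = a + tau_exp q k"
  shows "k = i"
proof -
  have "tau_exp q i + tau_exp q i = (a + a) + (tau_exp q k + tau_exp q k)"
    using assms(3) by (simp add: ac_simps)
  then show ?thesis
    using tau_exp_pair_dvd_imp_eq[OF assms(1,1,2,2)] by blast
qed

lemma perm_ideal_minimally_generated:
  "minimally_generates q (tau q ` {1..q}) (perm_ideal q :: 'k::field perm_poly set)"
proof -
  have gens: "tau q ` {1..q} = (\<lambda>t. Poly_Mapping.single t (1::'k)) ` tau_exp q ` {1..q}"
    by (auto simp: tau_eq_single_tau_exp)
  show ?thesis
    unfolding perm_ideal_def gens
  proof (rule minimally_generates_monomial_antichain)
    show "(\<lambda>t. Poly_Mapping.single t (1::'k)) ` tau_exp q ` {1..q} \<subseteq> ST q"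
      using tau_in_ST unfolding gens[symmetric] by blast
  next
    fix s t a
    assume "s \<in> tau_exp q ` {1..q}" "t \<in> tau_exp q ` {1..q}" "t = a + s"
    then obtain k i where "k \<in> {1..q}" "i \<in> {1..q}" "s = tau_exp q k" "t = tau_exp q i"
      by blast
    with \<open>t = a + s\<close> show "s = t"
      using tau_exp_dvd_imp_eq by metis
  qed
qed

lemma tau_products_eq_ordered:
  "{a * b | a b. a \<in> tau q ` {1..q} \<and> b \<in> tau q ` {1..q}}
     = {tau q i * tau q j | i j. 1 \<le> i \<and> i \<le> j \<and> j \<le> q}"
proof (intro equalityI subsetI)
  fix x assume "x \<in> {a * b | a b. a \<in> tau q ` {1..q} \<and> b \<in> tau q ` {1..q}}"
  then obtain i j where ij: "i \<in> {1..q}" "j \<in> {1..q}" "x = tau q i * tau q j"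
    by blast
  show "x \<in> {tau q i * tau q j | i j. 1 \<le> i \<and> i \<le> j \<and> j \<le> q}"
  proof (cases "i \<le> j")
    case False
    then show ?thesis
      using ij by (intro CollectI exI[of _ j] exI[of _ i]) (auto simp: mult.commute)
  qed (use ij in auto)
next
  fix x assume "x \<in> {tau q i * tau q j | i j. 1 \<le> i \<and> i \<le> j \<and> j \<le> q}"
  then obtain i j where "x = tau q i * tau q j" "i \<in> {1..q}" "j \<in> {1..q}"
    by auto
  then show "x \<in> {a * b | a b. a \<in> tau q ` {1..q} \<and> b \<in> tau q ` {1..q}}"
    by blast
qed

lemma perm_ideal_square_minimally_generated:
  "minimally_generates q {tau q i * tau q j | i j. 1 \<le> i \<and> i \<le> j \<and> j \<le> q}
     (ideal_mult q (perm_ideal q) (perm_ideal q) :: 'k::field perm_poly set)"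
proof -
  let ?T = "{tau_exp q i + tau_exp q j | i j. 1 \<le> i \<and> i \<le> j \<and> j \<le> q}"
  have gens: "{tau q i * tau q j | i j. 1 \<le> i \<and> i \<le> j \<and> j \<le> q}
      = (\<lambda>t. Poly_Mapping.single t (1::'k)) ` ?T"
    by (auto simp: tau_mult_tau)
  have square: "ideal_mult q (perm_ideal q) (perm_ideal q)
      = ideal_gen q {tau q i * tau q j :: 'k perm_poly | i j. 1 \<le> i \<and> i \<le> j \<and> j \<le> q}"
    unfolding perm_ideal_def ideal_mult_ideal_gen tau_products_eq_ordered ..
  show ?thesis
    unfolding square gens
  proof (rule minimally_generates_monomial_antichain)
    show "(\<lambda>t. Poly_Mapping.single t (1::'k)) ` ?T \<subseteq> ST q"
      using tau_in_ST unfolding gens[symmetric] by (auto intro: ST_mult)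
  next
    fix s t a
    assume "s \<in> ?T" "t \<in> ?T" "t = a + s"
    obtain k l where kl: "s = tau_exp q k + tau_exp q l" "1 \<le> k" "k \<le> l" "l \<le> q"
      using \<open>s \<in> ?T\<close> by blast
    obtain i j where ij: "t = tau_exp q i + tau_exp q j" "1 \<le> i" "i \<le> j" "j \<le> q"
      using \<open>t \<in> ?T\<close> by blast
    have "(i = k \<and> j = l) \<or> (i = l \<and> j = k)"
      using tau_exp_pair_dvd_imp_eq[of i q j k l a] \<open>t = a + s\<close> ij kl by simp
    then show "s = t"
      using ij(1) kl(1) by (elim disjE) (simp_all add: add.commute)
  qed
qed

lemma card_ordered_pairs: "card {(i, j). 1 \<le> i \<and> i \<le> j \<and> j \<le> (q::nat)} = (q choose 2) + q"
proof (induction q)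
  case 0
  have "{(i, j). 1 \<le> i \<and> i \<le> j \<and> j \<le> (0::nat)} = {}"
    by auto
  then show ?case
    by (simp only: card.empty) simp
next
  case (Suc q)
  have split: "{(i, j). 1 \<le> i \<and> i \<le> j \<and> j \<le> Suc q}
      = {(i, j). 1 \<le> i \<and> i \<le> j \<and> j \<le> q} \<union> (\<lambda>i. (i, Suc q)) ` {1..Suc q}"
    by auto
  have "finite {(i, j). 1 \<le> i \<and> i \<le> j \<and> j \<le> q}"
    by (rule finite_subset[of _ "{1..q} \<times> {1..q}"]) auto
  then have "card {(i, j). 1 \<le> i \<and> i \<le> j \<and> j \<le> Suc q}
      = card {(i, j). 1 \<le> i \<and> i \<le> j \<and> j \<le> q} + Suc q"
    unfolding split by (subst card_Un_disjoint) (auto simp: card_image inj_on_def)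
  then show ?case
    using Suc.IH by (simp add: numeral_2_eq_2)
qed

lemma card_tau_products:
  "card ({tau q i * tau q j | i j. 1 \<le> i \<and> i \<le> j \<and> j \<le> q} :: 'k::field perm_poly set)
     = (q choose 2) + q"
proof -
  let ?P = "{(i, j). 1 \<le> i \<and> i \<le> j \<and> j \<le> q}"
  have "i = k \<and> j = l"
    if "(i, j) \<in> ?P" "(k, l) \<in> ?P" "tau q i * tau q j = (tau q k * tau q l :: 'k perm_poly)"
    for i j k l
    using that tau_exp_pair_dvd_imp_eq[of i q j k l 0] by (auto simp: tau_mult_tau single_one_eq_iff)
  then have "inj_on (\<lambda>(i, j). tau q i * tau q j :: 'k perm_poly) ?P"
    by (auto simp only: inj_on_def split_paired_all case_prod_conv)
  moreover have "{tau q i * tau q j | i j. 1 \<le> i \<and> i \<le> j \<and> j \<le> q}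
      = (\<lambda>(i, j). tau q i * tau q j :: 'k perm_poly) ` ?P"
    by auto
  ultimately have "card {tau q i * tau q j :: 'k perm_poly | i j. 1 \<le> i \<and> i \<le> j \<and> j \<le> q} = card ?P"
    by (simp only: card_image)
  also have "\<dots> = (q choose 2) + q"
    by (rule card_ordered_pairs)
  finally show ?thesis .
qed

theorem lemma4p3:
  fixes q :: nat
  assumes "q \<ge> 1"
  shows "minimally_generates q (tau q ` {1..q}) (perm_ideal q :: 'k::field perm_poly set)
       \<and> minimally_generates q {tau q i * tau q j | i j. 1 \<le> i \<and> i \<le> j \<and> j \<le> q}
            (ideal_mult q (perm_ideal q) (perm_ideal q) :: 'k::field perm_poly set)
       \<and> card ({tau q i * tau q j | i j. 1 \<le> i \<and> i \<le> j \<and> j \<le> q} :: 'k::field perm_poly set)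
            = (q choose 2) + q"
  using perm_ideal_minimally_generated perm_ideal_square_minimally_generated card_tau_products
  by blast

end
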